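(* Let $\mathcal{I}=\{1,\dots,\mathbf{I}\}$ be a nonempty finite index set, $\{n^i, i\in\mathcal{I}\}$ a finite collection of $d$-dimensional vectors of unit length, $\beta=(\beta_1,\dots,\beta_{\mathbf{I}})'\in\mathbb{R}^{\mathbf{I}}$, and $G_i=\{x\in\mathbb{R}^d:\langle n^i,x\rangle>\beta_i\}$ for $i\in\mathcal{I}$. Suppose $G=\bigcap_{i\in\mathcal{I}} G_i$ is a nonempty domain (so $\overline{G}$ is a convex polyhedron) and that $\partial G_i\cap\partial G\neq\emptyset$ for each $i\in\mathcal{I}$. Then: (a) for each $\varepsilon\in(0,1)$ there exists $R(\varepsilon)>0$ such that for each $i\in\mathcal{I}$, $x\in\partial G_i\cap\partial G$ and $y\in\overline{G}$ with $\|x-y\|<R(\varepsilon)$, we have $\langle n^i, y-x\rangle\ge -\varepsilon\|x-y\|$; and (b) the function $D:[0,\infty)\to[0,\infty]$ defined by $D(0)=0$ and, for $r>0$, $$D(r)=\sup_{\emptyset\neq\mathcal{J}\subset\mathcal{I}}\ \sup\Big\{\operatorname{dist}\Big(x,\bigcap_{j\in\mathcal{J}}(\partial G_j\cap\partial G)\Big): x\in\bigcap_{j\in\mathcal{J}}U_r(\partial G_j\cap\partial G)\Big\}$$ satisfies $D(r)\to 0$ as $r\to 0$.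
   Context: $U_r(S)=\{x\in\mathbb{R}^d:\operatorname{dist}(x,S)\le r\}$ (with $U_r(\emptyset)=\emptyset$), $\operatorname{dist}(x,\emptyset)=\infty$, and the supremum over an empty set is taken to be zero. $\overline{G}$ is the closure and $\partial G$ the boundary of $G$. *)

theory Defs
  imports "HOL-Analysis.Analysis"
begin

definition nbhd :: "real \<Rightarrow> 'a::metric_space set \<Rightarrow> 'a set" where
  "nbhd r S = (if S = {} then {} else {x. infdist x S \<le> r})"

definition set_dist_inf :: "'a::metric_space \<Rightarrow> 'a set \<Rightarrow> ennreal" where
  "set_dist_inf x S = (if S = {} then top else ennreal (infdist x S))"

text \<open>The function D of the statement, for faces F j (j in I). Suprema are taken in
  ennreal, so the supremum of the empty set is 0.\<close>
definition Dfun :: "'i set \<Rightarrow> ('i \<Rightarrow> 'a::metric_space set) \<Rightarrow> real \<Rightarrow> ennreal" where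
  "Dfun I F r = (if r = 0 then 0 else
     (SUP J\<in>{J. J \<noteq> {} \<and> J \<subseteq> I}.
        (SUP x\<in>(\<Inter>j\<in>J. nbhd r (F j)). set_dist_inf x (\<Inter>j\<in>J. F j))))"

end

theory Submission
  imports Defs
begin

text \<open>
  Part (a) is immediate: \<open>x\<close> lies on the hyperplane \<open>\<langle>n\<^sup>i, x\<rangle> = \<beta>\<^sub>i\<close> and \<open>closure G\<close> in the
  closed half-space \<open>\<langle>n\<^sup>i, y\<rangle> \<ge> \<beta>\<^sub>i\<close>, so \<open>\<langle>n\<^sup>i, y - x\<rangle> \<ge> 0\<close>.

  For (b), the intersection of the faces \<open>\<partial>G\<^sub>j \<inter> \<partial>G\<close>, \<open>j \<in> J\<close>, is the solution set of the finite
  linear system \<open>\<langle>n\<^sup>i, x\<rangle> \<ge> \<beta>\<^sub>i\<close> (\<open>i \<in> I\<close>), \<open>\<langle>-n\<^sup>j, x\<rangle> \<ge> -\<beta>\<^sub>j\<close> (\<open>j \<in> J\<close>), and a point within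
  distance \<open>r\<close> of every face violates each of these inequalities by at most \<open>r\<close>. So (b) follows
  from a qualitative Hoffman bound: for a finite system of linear inequalities, every point that
  satisfies all of them up to a small enough slack \<open>\<delta>\<close> is within \<open>\<epsilon>\<close> of an exact solution.
  This is proved by induction on the system. A sequence of counterexamples with slack tending to
  zero may be taken in the span of the normals; either a subsequence converges, and its limit is
  an exact solution, or it escapes to infinity along a unit direction \<open>w\<close> with \<open>\<langle>a, w\<rangle> \<ge> 0\<close> for
  all constraints. The constraints with \<open>\<langle>a, w\<rangle> > 0\<close> then hold with any prescribed margin, and the
  induction hypothesis for the remaining ones yields a nearby exact solution.
\<close>

definition feasible_within :: "('a::real_inner \<times> real) set \<Rightarrow> real \<Rightarrow> 'a \<Rightarrow> bool" where
  "feasible_within K \<delta> x \<longleftrightarrow> (\<forall>(a, b)\<in>K. b - \<delta> \<le> a \<bullet> x)"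

lemma feasible_within_add_orthogonal:
  assumes "\<And>a b. (a, b) \<in> K \<Longrightarrow> a \<bullet> z = 0"
  shows "feasible_within K \<delta> (x + z) \<longleftrightarrow> feasible_within K \<delta> x"
  using assms by (fastforce simp: feasible_within_def inner_add_right)

lemma feasible_within_limit:
  assumes "\<And>m. feasible_within K (d m) (x m)" "d \<longlonglongrightarrow> \<delta>" "x \<longlonglongrightarrow> y"
  shows "feasible_within K \<delta> y"
  unfolding feasible_within_def
proof clarify
  fix a b assume "(a, b) \<in> K"
  then have "\<And>m. b - d m \<le> a \<bullet> x m"
    using assms(1) by (fastforce simp: feasible_within_def)
  moreover have "(\<lambda>m. b - d m) \<longlonglongrightarrow> b - \<delta>" "(\<lambda>m. a \<bullet> x m) \<longlonglongrightarrow> a \<bullet> y"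
    using assms(2,3) by (auto intro: tendsto_intros)
  ultimately show "b - \<delta> \<le> a \<bullet> y"
    by (meson LIMSEQ_le)
qed

lemma feasible_within_if_margin:
  assumes "K0 \<subseteq> K" "feasible_within K0 0 s" "dist x s \<le> \<epsilon>"
    and "\<And>a b. (a, b) \<in> K - K0 \<Longrightarrow> b + norm a * \<epsilon> \<le> a \<bullet> x"
  shows "feasible_within K 0 s"
  unfolding feasible_within_def
proof clarify
  fix a b assume ab: "(a, b) \<in> K"
  show "b - 0 \<le> a \<bullet> s"
  proof (cases "(a, b) \<in> K0")
    case True
    then show ?thesis using assms(2) by (auto simp: feasible_within_def)
  next
    case False
    have "a \<bullet> (x - s) \<le> norm a * norm (x - s)"
      by (rule norm_cauchy_schwarz)
    also have "\<dots> \<le> norm a * \<epsilon>"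
      using assms(3) by (intro mult_left_mono) (auto simp: dist_norm)
    finally show ?thesis
      using assms(4)[of a b] ab False by (simp add: inner_diff_right)
  qed
qed

lemma approx_feasible_far_point_in_span:
  fixes K :: "('a::euclidean_space \<times> real) set"
  assumes "feasible_within K \<delta> x" "\<nexists>s. feasible_within K 0 s \<and> dist x s \<le> \<epsilon>"
  obtains y where "y \<in> span (fst ` K)" "feasible_within K \<delta> y"
    "\<nexists>s. feasible_within K 0 s \<and> dist y s \<le> \<epsilon>"
proof -
  obtain y z where yz: "y \<in> span (fst ` K)" "\<And>w. w \<in> span (fst ` K) \<Longrightarrow> orthogonal z w" "x = y + z"
    using orthogonal_subspace_decomp_exists by blast
  have z: "a \<bullet> z = 0" if "(a, b) \<in> K" for a b
    using yz(2)[of a] that by (force simp: orthogonal_def inner_commute intro: span_base)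
  have orth: "feasible_within K d (v + z) \<longleftrightarrow> feasible_within K d v" for d v
    by (rule feasible_within_add_orthogonal) (rule z)
  have "feasible_within K \<delta> y"
    using assms(1) orth yz(3) by simp
  moreover have "\<not> dist y s \<le> \<epsilon>" if "feasible_within K 0 s" for s
  proof -
    have "feasible_within K 0 (s + z)"
      using that orth by simp
    then have "\<not> dist x (s + z) \<le> \<epsilon>"
      using assms(2) by blast
    then show ?thesis
      by (simp add: yz(3) dist_norm)
  qed
  ultimately show ?thesis
    using that yz(1) by blast
qed

lemma subseq_convergent_or_direction:
  fixes X :: "nat \<Rightarrow> 'a::euclidean_space"
  obtains r y where "strict_mono r" "(X \<circ> r) \<longlonglongrightarrow> y"
  | r c w where "strict_mono r" "c \<longlonglongrightarrow> 0" "\<And>m. 0 < c m"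
      "(\<lambda>m. c m *\<^sub>R X (r m)) \<longlonglongrightarrow> w" "norm w = 1"
proof -
  define t where "t m = 1 / (1 + norm (X m))" for m
  define V where "V m = (t m *\<^sub>R X m, t m)" for m
  have t: "0 < t m" "t m \<le> 1" for m
    by (auto simp: t_def add_pos_nonneg)
  have norm_tX: "norm (t m *\<^sub>R X m) = 1 - t m" for m
  proof -
    have "0 < 1 + norm (X m)"
      by (simp add: add_pos_nonneg)
    then show ?thesis
      by (simp add: t_def field_simps)
  qed
  have "V m \<in> cball 0 1 \<times> {0..1}" for m
    using t[of m] norm_tX[of m] by (simp add: V_def)
  moreover have "seq_compact (cball (0::'a) 1 \<times> {0..(1::real)})"
    by (intro compact_imp_seq_compact compact_Times) auto
  ultimately obtain l r where r: "l \<in> cball 0 1 \<times> {0..1}" "strict_mono r" "(V \<circ> r) \<longlonglongrightarrow> l"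
    using seq_compactE by metis
  obtain w t0 where l: "l = (w, t0)"
    by (cases l)
  have wlim: "(\<lambda>m. t (r m) *\<^sub>R X (r m)) \<longlonglongrightarrow> w" and tlim: "(\<lambda>m. t (r m)) \<longlonglongrightarrow> t0"
    using tendsto_fst[OF r(3)] tendsto_snd[OF r(3)] by (simp_all add: l V_def o_def)
  show ?thesis
  proof (cases "t0 = 0")
    case True
    have "(\<lambda>m. norm (t (r m) *\<^sub>R X (r m))) \<longlonglongrightarrow> 1 - 0"
      unfolding norm_tX using tlim True by (intro tendsto_intros) auto
    then have "norm w = 1"
      using tendsto_norm[OF wlim] LIMSEQ_unique by fastforce
    then show ?thesis
      using that(2)[OF r(2) _ t(1) wlim] tlim True by simp
  next
    case False
    then have "0 < t0"
      using r(1) l by simp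
    have "(\<lambda>m. (1 / t (r m)) *\<^sub>R (t (r m) *\<^sub>R X (r m))) \<longlonglongrightarrow> (1 / t0) *\<^sub>R w"
      using wlim tlim \<open>0 < t0\<close> by (intro tendsto_intros) auto
    moreover have "(1 / t m) *\<^sub>R (t m *\<^sub>R X m) = X m" for m
      using t(1)[of m] by simp
    ultimately show ?thesis
      using that(1)[OF r(2)] by (simp add: o_def)
  qed
qed

lemma recession_direction_nonneg:
  assumes "\<And>m. feasible_within K (d m) (x m)" "d \<longlonglongrightarrow> 0" "c \<longlonglongrightarrow> 0" "\<And>m. 0 \<le> c m"
    and "(\<lambda>m. c m *\<^sub>R x m) \<longlonglongrightarrow> w" "(a, b) \<in> K"
  shows "0 \<le> a \<bullet> w"
proof -
  have le: "c m * (b - d m) \<le> a \<bullet> (c m *\<^sub>R x m)" for m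
  proof -
    have "b - d m \<le> a \<bullet> x m"
      using assms(1)[of m] assms(6) by (auto simp: feasible_within_def)
    then show ?thesis
      using assms(4)[of m] by (simp add: mult_left_mono)
  qed
  have "(\<lambda>m. c m * (b - d m)) \<longlonglongrightarrow> 0 * (b - 0)"
    by (intro tendsto_intros assms(2,3))
  moreover have "(\<lambda>m. a \<bullet> (c m *\<^sub>R x m)) \<longlonglongrightarrow> a \<bullet> w"
    by (intro tendsto_inner tendsto_const assms(5))
  ultimately have "0 * (b - 0) \<le> a \<bullet> w"
    by (rule LIMSEQ_le) (use le in blast)
  then show ?thesis
    by simp
qed

lemma eventually_margin_along_direction:
  assumes "finite L" "\<And>a b. (a, b) \<in> L \<Longrightarrow> 0 < a \<bullet> w"
    and "c \<longlonglongrightarrow> 0" "\<And>m. 0 < c m" "(\<lambda>m. c m *\<^sub>R x m) \<longlonglongrightarrow> w"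
  shows "\<forall>\<^sub>F m in sequentially. \<forall>(a, b)\<in>L. b + h a \<le> a \<bullet> x m"
proof (rule eventually_ball_finite[OF assms(1)], clarify)
  fix a b assume "(a, b) \<in> L"
  have "a \<bullet> x m = (a \<bullet> (c m *\<^sub>R x m)) / c m" for m
    using assms(4)[of m] by simp
  moreover have "(\<lambda>m. a \<bullet> (c m *\<^sub>R x m)) \<longlonglongrightarrow> a \<bullet> w"
    by (intro tendsto_inner tendsto_const assms(5))
  then have "filterlim (\<lambda>m. (a \<bullet> (c m *\<^sub>R x m)) / c m) at_top sequentially"
    using assms(2)[OF \<open>(a, b) \<in> L\<close>] assms(3,4) by (intro LIM_at_top_divide) auto
  ultimately show "\<forall>\<^sub>F m in sequentially. b + h a \<le> a \<bullet> x m"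
    by (simp add: filterlim_at_top)
qed

lemma span_nonzero_imp_inner_nonzero:
  fixes w :: "'a::real_inner"
  assumes "w \<in> span (fst ` K)" "w \<noteq> 0"
  shows "\<exists>(a, b)\<in>K. a \<bullet> w \<noteq> 0"
proof (rule ccontr)
  assume "\<not> ?thesis"
  then have "orthogonal w a" if "a \<in> fst ` K" for a
    using that by (force simp: orthogonal_def inner_commute)
  then have "w \<bullet> w = 0"
    using orthogonal_to_span[OF assms(1)] by (simp add: orthogonal_def)
  then show False
    using assms(2) by simp
qed

lemma escaping_approx_solutions_near_feasible:
  fixes K :: "('a::euclidean_space \<times> real) set"
  assumes "finite K"
    and IH: "\<And>K0. K0 \<subset> K \<Longrightarrow>
      \<exists>\<delta>>0. \<forall>x. feasible_within K0 \<delta> x \<longrightarrow> (\<exists>s. feasible_within K0 0 s \<and> dist x s \<le> \<epsilon>)"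
    and x: "\<And>m. x m \<in> span (fst ` K)" "\<And>m. feasible_within K (d m) (x m)" "d \<longlonglongrightarrow> 0"
    and c: "c \<longlonglongrightarrow> 0" "\<And>m. 0 < c m" "(\<lambda>m. c m *\<^sub>R x m) \<longlonglongrightarrow> w" "norm w = 1"
  shows "\<exists>m s. feasible_within K 0 s \<and> dist (x m) s \<le> \<epsilon>"
proof -
  have "w \<in> span (fst ` K)"
    using closed_sequentially[OF closed_span _ c(3)] x(1) by (simp add: span_mul)
  then obtain a0 b0 where "(a0, b0) \<in> K" "a0 \<bullet> w \<noteq> 0"
    using span_nonzero_imp_inner_nonzero c(4) by fastforce
  define K0 where "K0 = {p \<in> K. fst p \<bullet> w = 0}"
  have "K0 \<subset> K"
    using \<open>(a0, b0) \<in> K\<close> \<open>a0 \<bullet> w \<noteq> 0\<close> unfolding K0_def by force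
  then obtain \<delta> where "0 < \<delta>"
      and \<delta>: "\<And>x. feasible_within K0 \<delta> x \<Longrightarrow> \<exists>s. feasible_within K0 0 s \<and> dist x s \<le> \<epsilon>"
    using IH by blast
  have "0 < a \<bullet> w" if "(a, b) \<in> K - K0" for a b
    using recession_direction_nonneg[OF x(2,3) c(1) less_imp_le[OF c(2)] c(3)] that
    unfolding K0_def by force
  then have "\<forall>\<^sub>F m in sequentially. \<forall>(a, b)\<in>K - K0. b + norm a * \<epsilon> \<le> a \<bullet> x m"
    using \<open>finite K\<close> by (intro eventually_margin_along_direction[OF _ _ c(1-3)]) auto
  moreover have "\<forall>\<^sub>F m in sequentially. d m < \<delta>"
    using x(3) \<open>0 < \<delta>\<close> by (rule order_tendstoD)
  ultimately obtain m where margin: "\<forall>(a, b)\<in>K - K0. b + norm a * \<epsilon> \<le> a \<bullet> x m"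
      and "d m < \<delta>"
    using eventually_happens'[OF sequentially_bot eventually_conj] by blast
  have "feasible_within K0 \<delta> (x m)"
    using x(2)[of m] \<open>d m < \<delta>\<close> unfolding feasible_within_def K0_def by auto
  then obtain s where s: "feasible_within K0 0 s" "dist (x m) s \<le> \<epsilon>"
    using \<delta> by blast
  have "feasible_within K 0 s"
  proof (rule feasible_within_if_margin[OF _ s])
    show "K0 \<subseteq> K"
      by (simp add: K0_def)
    show "b + norm a * \<epsilon> \<le> a \<bullet> x m" if "(a, b) \<in> K - K0" for a b
      using margin that by blast
  qed
  then show ?thesis
    using s(2) by blast
qed

lemma approx_feasible_imp_near_feasible:
  fixes K :: "('a::euclidean_space \<times> real) set"
  assumes "finite K" "0 < \<epsilon>"
  shows "\<exists>\<delta>>0. \<forall>x. feasible_within K \<delta> x \<longrightarrow> (\<exists>s. feasible_within K 0 s \<and> dist x s \<le> \<epsilon>)"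
  using assms
proof (induction K arbitrary: \<epsilon> rule: finite_psubset_induct)
  case (psubset K)
  define d where "d m = inverse (real (Suc m))" for m
  show ?case
  proof (rule ccontr)
    assume far: "\<not> ?case"
    have "\<exists>x. x \<in> span (fst ` K) \<and> feasible_within K (d m) x \<and>
        (\<nexists>s. feasible_within K 0 s \<and> dist x s \<le> \<epsilon>)" for m
    proof -
      have "0 < d m"
        by (simp add: d_def)
      then obtain x where "feasible_within K (d m) x" "\<nexists>s. feasible_within K 0 s \<and> dist x s \<le> \<epsilon>"
        using far by blast
      then show ?thesis
        by (rule approx_feasible_far_point_in_span) blast
    qed
    then obtain X where X: "\<And>m. X m \<in> span (fst ` K)" "\<And>m. feasible_within K (d m) (X m)"
        "\<And>m. \<nexists>s. feasible_within K 0 s \<and> dist (X m) s \<le> \<epsilon>"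
      by metis
    have d: "d \<longlonglongrightarrow> 0"
      unfolding d_def by (rule LIMSEQ_inverse_real_of_nat)
    show False
    proof (cases rule: subseq_convergent_or_direction[of X])
      case (1 r y)
      have "feasible_within K ((d \<circ> r) m) ((X \<circ> r) m)" for m
        using X(2) by simp
      moreover have "(d \<circ> r) \<longlonglongrightarrow> 0"
        using d 1(1) by (rule LIMSEQ_subseq_LIMSEQ)
      ultimately have "feasible_within K 0 y"
        using 1(2) by (rule feasible_within_limit)
      moreover have "\<forall>\<^sub>F m in sequentially. dist ((X \<circ> r) m) y < \<epsilon>"
        using 1(2) psubset.prems by (rule tendstoD)
      then obtain m where "dist (X (r m)) y < \<epsilon>"
        using eventually_happens'[OF sequentially_bot] by auto
      ultimately show False
        using X(3)[of "r m"] by force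
    next
      case (2 r c w)
      have "(d \<circ> r) \<longlonglongrightarrow> 0"
        using d 2(1) by (rule LIMSEQ_subseq_LIMSEQ)
      then have "\<exists>m s. feasible_within K 0 s \<and> dist (X (r m)) s \<le> \<epsilon>"
        using psubset.hyps psubset.IH[OF _ psubset.prems] X(1,2) 2(2-5)
        by (intro escaping_approx_solutions_near_feasible[where d = "d \<circ> r"]) auto
      then show False
        using X(3) by blast
    qed
  qed
qed

lemma infdist_lessE:
  assumes "A \<noteq> {}" "infdist x A < e"
  obtains a where "a \<in> A" "dist x a < e"
proof -
  have "Inf ((\<lambda>a. dist x a) ` A) < e"
    using assms infdist_notempty by metis
  then show ?thesis
    using cInf_lessD[of "(\<lambda>a. dist x a) ` A" e] assms(1) that by blast
qed

lemma set_dist_inf_le: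
  assumes "s \<in> S" "dist x s \<le> e"
  shows "set_dist_inf x S \<le> ennreal e"
  using assms infdist_le2[OF assms] by (auto simp: set_dist_inf_def intro: ennreal_leI)

lemma tendsto_ennreal_zeroI:
  assumes "\<And>\<epsilon>. 0 < \<epsilon> \<Longrightarrow> \<forall>\<^sub>F x in F. f x \<le> ennreal \<epsilon>"
  shows "(f \<longlongrightarrow> 0) F"
proof (rule order_tendstoI)
  fix a :: ennreal assume "0 < a"
  then obtain y where y: "0 < y" "y < a"
    using dense by blast
  then have "y < top"
    using top_greatest less_le_trans by blast
  define \<epsilon> where "\<epsilon> = enn2real y"
  have "0 < \<epsilon>" "ennreal \<epsilon> < a"
    using y \<open>y < top\<close> by (auto simp: \<epsilon>_def enn2real_positive_iff)
  then show "\<forall>\<^sub>F x in F. f x < a"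
    using assms[of \<epsilon>] by (auto elim: eventually_mono intro: le_less_trans)
qed simp

lemma feasible_within_if_near_solutions:
  assumes "\<And>a b. (a, b) \<in> K \<Longrightarrow> norm a \<le> 1"
    and "\<And>a b. (a, b) \<in> K \<Longrightarrow> \<exists>y. b \<le> a \<bullet> y \<and> dist x y \<le> \<delta>"
  shows "feasible_within K \<delta> x"
  unfolding feasible_within_def
proof clarify
  fix a b assume ab: "(a, b) \<in> K"
  then obtain y where y: "b \<le> a \<bullet> y" "dist x y \<le> \<delta>"
    using assms(2) by blast
  have "a \<bullet> (y - x) \<le> norm a * norm (y - x)"
    by (rule norm_cauchy_schwarz)
  also have "\<dots> \<le> dist x y"
    using assms(1)[OF ab] by (simp add: dist_norm norm_minus_commute mult_left_le_one_le)
  finally show "b - \<delta> \<le> a \<bullet> x"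
    using y by (simp add: inner_diff_right)
qed

lemma eventually_SUP_set_dist_inf_Inter_nbhd_le:
  fixes F :: "'j \<Rightarrow> 'a::euclidean_space set" and K :: "('a \<times> real) set"
  assumes "finite K" "0 < \<epsilon>"
    and Inter_F: "(\<Inter>j\<in>J. F j) = {x. feasible_within K 0 x}"
    and norm_le: "\<And>a b. (a, b) \<in> K \<Longrightarrow> norm a \<le> 1"
    and valid: "\<And>a b. (a, b) \<in> K \<Longrightarrow> \<exists>j\<in>J. \<forall>y\<in>F j. b \<le> a \<bullet> y"
  shows "\<forall>\<^sub>F r in at_right 0. (SUP x\<in>(\<Inter>j\<in>J. nbhd r (F j)). set_dist_inf x (\<Inter>j\<in>J. F j)) \<le> ennreal \<epsilon>"
proof -
  obtain \<delta> where "0 < \<delta>"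
      and \<delta>: "\<And>x. feasible_within K \<delta> x \<Longrightarrow> \<exists>s. feasible_within K 0 s \<and> dist x s \<le> \<epsilon>"
    using approx_feasible_imp_near_feasible[OF assms(1,2)] by blast
  have "(SUP x\<in>(\<Inter>j\<in>J. nbhd r (F j)). set_dist_inf x (\<Inter>j\<in>J. F j)) \<le> ennreal \<epsilon>"
    if "r < \<delta>" for r
  proof (rule SUP_least)
    fix x assume x: "x \<in> (\<Inter>j\<in>J. nbhd r (F j))"
    have "feasible_within K \<delta> x"
    proof (rule feasible_within_if_near_solutions[OF norm_le])
      fix a b assume "(a, b) \<in> K"
      then obtain j where j: "j \<in> J" "\<forall>y\<in>F j. b \<le> a \<bullet> y"
        using valid by blast
      then have "x \<in> nbhd r (F j)"
        using x by blast
      then have "F j \<noteq> {}" "infdist x (F j) \<le> r"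
        by (auto simp: nbhd_def split: if_splits)
      then obtain y where "y \<in> F j" "dist x y < \<delta>"
        using \<open>r < \<delta>\<close> infdist_lessE[of "F j" x \<delta>] by auto
      then show "\<exists>y. b \<le> a \<bullet> y \<and> dist x y \<le> \<delta>"
        using j(2) less_imp_le by blast
    qed
    then obtain s where "feasible_within K 0 s" "dist x s \<le> \<epsilon>"
      using \<delta> by blast
    then show "set_dist_inf x (\<Inter>j\<in>J. F j) \<le> ennreal \<epsilon>"
      by (intro set_dist_inf_le) (simp_all add: Inter_F)
  qed
  then show ?thesis
    using eventually_at_right_real[OF \<open>0 < \<delta>\<close>] by (auto elim: eventually_mono)
qed

lemma closure_Inter_halfspaces_gt:
  fixes n :: "'i \<Rightarrow> 'a::euclidean_space"
  assumes "\<And>i. i \<in> I \<Longrightarrow> n i \<noteq> 0" "(\<Inter>i\<in>I. {x. \<beta> i < n i \<bullet> x}) \<noteq> {}"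
  shows "closure (\<Inter>i\<in>I. {x. \<beta> i < n i \<bullet> x}) = (\<Inter>i\<in>I. {x. \<beta> i \<le> n i \<bullet> x})"
proof -
  have convex_open: "\<And>S. S \<in> (\<lambda>i. {x. \<beta> i < n i \<bullet> x}) ` I \<Longrightarrow> convex S \<and> open S"
    by (auto simp: convex_halfspace_gt open_halfspace_gt)
  have "closure (\<Inter>i\<in>I. {x. \<beta> i < n i \<bullet> x}) = (\<Inter>i\<in>I. closure {x. \<beta> i < n i \<bullet> x})"
    using closure_Inter_convex_open[OF convex_open] assms(2) by (simp add: image_image)
  then show ?thesis
    using assms(1) by simp
qed

definition face_system :: "('i \<Rightarrow> 'a::uminus) \<Rightarrow> ('i \<Rightarrow> real) \<Rightarrow> 'i set \<Rightarrow> 'i set \<Rightarrow> ('a \<times> real) set" where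
  "face_system n \<beta> I J = (\<lambda>i. (n i, \<beta> i)) ` I \<union> (\<lambda>j. (- n j, - \<beta> j)) ` J"

lemma feasible_face_system_iff:
  fixes n :: "'i \<Rightarrow> 'a::real_inner"
  assumes "J \<subseteq> I"
  shows "feasible_within (face_system n \<beta> I J) 0 x \<longleftrightarrow>
    (\<forall>i\<in>I. \<beta> i \<le> n i \<bullet> x) \<and> (\<forall>j\<in>J. n j \<bullet> x = \<beta> j)"
proof -
  have "feasible_within (face_system n \<beta> I J) 0 x \<longleftrightarrow>
      (\<forall>i\<in>I. \<beta> i \<le> n i \<bullet> x) \<and> (\<forall>j\<in>J. n j \<bullet> x \<le> \<beta> j)"
    unfolding feasible_within_def face_system_def ball_Un Ball_image_comp by (simp add: o_def)
  then show ?thesis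
    using assms by (auto intro: order.antisym)
qed

lemma Inter_faces_halfspaces_gt:
  fixes I :: "'i set" and n :: "'i \<Rightarrow> 'a::euclidean_space" and \<beta> :: "'i \<Rightarrow> real"
  defines "P \<equiv> \<Inter>i\<in>I. {x. \<beta> i < n i \<bullet> x}"
  assumes "\<And>i. i \<in> I \<Longrightarrow> n i \<noteq> 0" "P \<noteq> {}" "J \<subseteq> I" "J \<noteq> {}"
  shows "(\<Inter>j\<in>J. frontier {x. \<beta> j < n j \<bullet> x} \<inter> frontier P) =
    {x. (\<forall>i\<in>I. \<beta> i \<le> n i \<bullet> x) \<and> (\<forall>j\<in>J. n j \<bullet> x = \<beta> j)}"
proof -
  have closure_P: "closure P = (\<Inter>i\<in>I. {x. \<beta> i \<le> n i \<bullet> x})"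
    using closure_Inter_halfspaces_gt[OF assms(2)] assms(3) by (simp add: P_def)
  have hyperplane: "frontier {x. \<beta> j < n j \<bullet> x} = {x. n j \<bullet> x = \<beta> j}" if "j \<in> J" for j
    using frontier_halfspace_gt[of "n j" "\<beta> j"] assms(2,4) that by auto
  have not_interior: "x \<notin> interior P" if "j \<in> J" "n j \<bullet> x = \<beta> j" for j x
  proof -
    have "j \<in> I"
      using assms(4) that(1) by blast
    moreover have "\<not> \<beta> j < n j \<bullet> x"
      using that(2) by simp
    ultimately have "x \<notin> P"
      unfolding P_def by blast
    then show ?thesis
      using interior_subset by blast
  qed
  show ?thesis
  proof (intro equalityI subsetI)
    fix x assume x: "x \<in> (\<Inter>j\<in>J. frontier {x. \<beta> j < n j \<bullet> x} \<inter> frontier P)"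
    obtain j where "j \<in> J"
      using assms(5) by blast
    then have "x \<in> frontier P"
      using x by blast
    then have "x \<in> closure P"
      by (simp add: frontier_def)
    moreover have "n j \<bullet> x = \<beta> j" if "j \<in> J" for j
      using x that hyperplane by blast
    ultimately show "x \<in> {x. (\<forall>i\<in>I. \<beta> i \<le> n i \<bullet> x) \<and> (\<forall>j\<in>J. n j \<bullet> x = \<beta> j)}"
      by (simp add: closure_P)
  next
    fix x assume x: "x \<in> {x. (\<forall>i\<in>I. \<beta> i \<le> n i \<bullet> x) \<and> (\<forall>j\<in>J. n j \<bullet> x = \<beta> j)}"
    have "x \<in> frontier P" if "j \<in> J" for j
    proof -
      have "n j \<bullet> x = \<beta> j"
        using x that by simp
      then show ?thesis
        using not_interior[OF that] x by (simp add: frontier_def closure_P)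
    qed
    then show "x \<in> (\<Inter>j\<in>J. frontier {x. \<beta> j < n j \<bullet> x} \<inter> frontier P)"
      using x hyperplane by auto
  qed
qed

lemma face_system_describes_faces:
  fixes I :: "'i set" and n :: "'i \<Rightarrow> 'a::euclidean_space" and \<beta> :: "'i \<Rightarrow> real"
  assumes P_eq: "P = (\<Inter>i\<in>I. {x. \<beta> i < n i \<bullet> x})"
    and unit: "\<forall>i\<in>I. norm (n i) = 1" and "P \<noteq> {}" and J: "J \<subseteq> I" "J \<noteq> {}"
    and F: "\<forall>j\<in>I. F j = frontier {x. \<beta> j < n j \<bullet> x} \<inter> frontier P"
  shows "(\<Inter>j\<in>J. F j) = {x. feasible_within (face_system n \<beta> I J) 0 x}"
    and "(a, b) \<in> face_system n \<beta> I J \<Longrightarrow> norm a \<le> 1"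
    and "(a, b) \<in> face_system n \<beta> I J \<Longrightarrow> \<exists>j\<in>J. \<forall>y\<in>F j. b \<le> a \<bullet> y"
proof -
  have n_nonzero: "n i \<noteq> 0" if "i \<in> I" for i
    using unit that by auto
  have Inter_F: "(\<Inter>j\<in>L. F j) = {x. feasible_within (face_system n \<beta> I L) 0 x}"
    if "L \<subseteq> I" "L \<noteq> {}" for L
  proof -
    have "(\<Inter>j\<in>L. F j) = (\<Inter>j\<in>L. frontier {x. \<beta> j < n j \<bullet> x} \<inter> frontier P)"
      using F that(1) by (simp add: subset_iff)
    then show ?thesis
      using Inter_faces_halfspaces_gt[OF n_nonzero _ that] \<open>P \<noteq> {}\<close>
      by (simp add: P_eq feasible_face_system_iff[OF that(1)])
  qed
  then show "(\<Inter>j\<in>J. F j) = {x. feasible_within (face_system n \<beta> I J) 0 x}"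
    using J by blast
  show "norm a \<le> 1" if "(a, b) \<in> face_system n \<beta> I J"
    using that J unit by (auto simp: face_system_def)
  have face_ineqs: "\<beta> i \<le> n i \<bullet> y \<and> n j \<bullet> y = \<beta> j" if "i \<in> I" "j \<in> I" "y \<in> F j" for i j y
    using Inter_F[of "{j}"] that by (simp add: feasible_face_system_iff)
  show "\<exists>j\<in>J. \<forall>y\<in>F j. b \<le> a \<bullet> y" if "(a, b) \<in> face_system n \<beta> I J"
  proof -
    obtain j0 where "j0 \<in> J"
      using J(2) by blast
    from that consider i where "i \<in> I" "a = n i" "b = \<beta> i"
      | j where "j \<in> J" "a = - n j" "b = - \<beta> j"
      unfolding face_system_def by blast
    then show ?thesis
    proof cases
      case 1
      then show ?thesis
        using \<open>j0 \<in> J\<close> J(1) face_ineqs by blast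
    next
      case 2
      then have "\<forall>y\<in>F j. b \<le> a \<bullet> y"
        using J(1) face_ineqs by force
      then show ?thesis
        using \<open>j \<in> J\<close> by blast
    qed
  qed
qed

lemma Dfun_tendsto_zero:
  fixes F :: "'i \<Rightarrow> 'a::euclidean_space set" and K :: "'i set \<Rightarrow> ('a \<times> real) set"
  assumes "finite I"
    and finite_K: "\<And>J. J \<subseteq> I \<Longrightarrow> J \<noteq> {} \<Longrightarrow> finite (K J)"
    and Inter_F: "\<And>J. J \<subseteq> I \<Longrightarrow> J \<noteq> {} \<Longrightarrow> (\<Inter>j\<in>J. F j) = {x. feasible_within (K J) 0 x}"
    and norm_le: "\<And>J a b. J \<subseteq> I \<Longrightarrow> J \<noteq> {} \<Longrightarrow> (a, b) \<in> K J \<Longrightarrow> norm a \<le> 1"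
    and valid: "\<And>J a b. J \<subseteq> I \<Longrightarrow> J \<noteq> {} \<Longrightarrow> (a, b) \<in> K J \<Longrightarrow> \<exists>j\<in>J. \<forall>y\<in>F j. b \<le> a \<bullet> y"
  shows "(Dfun I F \<longlongrightarrow> 0) (at_right 0)"
proof (rule tendsto_ennreal_zeroI)
  fix \<epsilon> :: real assume "0 < \<epsilon>"
  have "\<forall>\<^sub>F r in at_right 0. \<forall>J\<in>{J. J \<noteq> {} \<and> J \<subseteq> I}.
      (SUP x\<in>(\<Inter>j\<in>J. nbhd r (F j)). set_dist_inf x (\<Inter>j\<in>J. F j)) \<le> ennreal \<epsilon>"
  proof (rule eventually_ball_finite)
    show "finite {J. J \<noteq> {} \<and> J \<subseteq> I}"
      using \<open>finite I\<close> by simp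
    show "\<forall>J\<in>{J. J \<noteq> {} \<and> J \<subseteq> I}. \<forall>\<^sub>F r in at_right 0.
        (SUP x\<in>(\<Inter>j\<in>J. nbhd r (F j)). set_dist_inf x (\<Inter>j\<in>J. F j)) \<le> ennreal \<epsilon>"
    proof clarify
      fix J assume "J \<noteq> {}" "J \<subseteq> I"
      then show "\<forall>\<^sub>F r in at_right 0.
          (SUP x\<in>(\<Inter>j\<in>J. nbhd r (F j)). set_dist_inf x (\<Inter>j\<in>J. F j)) \<le> ennreal \<epsilon>"
        by (intro eventually_SUP_set_dist_inf_Inter_nbhd_le[OF finite_K \<open>0 < \<epsilon>\<close> Inter_F]
            norm_le valid)
    qed
  qed
  then show "\<forall>\<^sub>F r in at_right 0. Dfun I F r \<le> ennreal \<epsilon>"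
    using eventually_at_right_less[of 0]
  proof eventually_elim
    case (elim r)
    then have "Dfun I F r = (SUP J\<in>{J. J \<noteq> {} \<and> J \<subseteq> I}.
        (SUP x\<in>(\<Inter>j\<in>J. nbhd r (F j)). set_dist_inf x (\<Inter>j\<in>J. F j)))"
      by (simp add: Dfun_def)
    then show ?case
      using elim(1) by (simp only: SUP_le_iff)
  qed
qed

lemma inner_diff_nonneg_face_halfspaces_gt:
  fixes n :: "'i \<Rightarrow> 'a::euclidean_space"
  assumes "\<forall>i\<in>I. n i \<noteq> 0" "P = (\<Inter>i\<in>I. {x. \<beta> i < n i \<bullet> x})" "P \<noteq> {}" "i \<in> I"
    and "x \<in> frontier {x. \<beta> i < n i \<bullet> x}" "y \<in> closure P"
  shows "0 \<le> n i \<bullet> (y - x)"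
proof -
  have "n i \<bullet> x = \<beta> i"
    using frontier_halfspace_gt[of "n i" "\<beta> i"] assms(1,4,5) by auto
  moreover have "\<beta> i \<le> n i \<bullet> y"
    using closure_Inter_halfspaces_gt[of I n \<beta>] assms(1-4,6) by auto
  ultimately show ?thesis
    by (simp add: inner_diff_right)
qed

lemma Dfun_faces_halfspaces_gt_tendsto_zero:
  fixes n :: "'i \<Rightarrow> 'a::euclidean_space"
  assumes "finite I" "P = (\<Inter>i\<in>I. {x. \<beta> i < n i \<bullet> x})" "\<forall>i\<in>I. norm (n i) = 1" "P \<noteq> {}"
    and "\<forall>j\<in>I. F j = frontier {x. \<beta> j < n j \<bullet> x} \<inter> frontier P"
  shows "(Dfun I F \<longlongrightarrow> 0) (at_right 0)"
proof (rule Dfun_tendsto_zero[where K = "face_system n \<beta> I"])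
  show "finite I"
    by (fact assms(1))
  fix J assume J: "J \<subseteq> I" "J \<noteq> {}"
  note faces = face_system_describes_faces[OF assms(2-4) J assms(5)]
  show "finite (face_system n \<beta> I J)"
    using J assms(1) by (simp add: face_system_def finite_subset)
  show "(\<Inter>j\<in>J. F j) = {x. feasible_within (face_system n \<beta> I J) 0 x}"
    by (fact faces(1))
  show "norm a \<le> 1" if "(a, b) \<in> face_system n \<beta> I J" for a b
    using faces(2)[OF that] .
  show "\<exists>j\<in>J. \<forall>y\<in>F j. b \<le> a \<bullet> y" if "(a, b) \<in> face_system n \<beta> I J" for a b
    using faces(3)[OF that] .
qed

theorem lemmaA3:
  fixes N :: nat
    and n :: "nat \<Rightarrow> 'a::euclidean_space"
    and \<beta> :: "nat \<Rightarrow> real"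
    and Gi :: "nat \<Rightarrow> 'a set"
    and G :: "'a set"
  assumes N_pos: "N \<ge> 1"
    and unit: "\<forall>i\<in>{1..N}. norm (n i) = 1"
    and Gi_def: "\<forall>i\<in>{1..N}. Gi i = {x. n i \<bullet> x > \<beta> i}"
    and G_def: "G = (\<Inter>i\<in>{1..N}. Gi i)"
    and G_domain: "G \<noteq> {} \<and> open G \<and> connected G"
    and faces: "\<forall>i\<in>{1..N}. frontier (Gi i) \<inter> frontier G \<noteq> {}"
  shows "(\<forall>\<epsilon>\<in>{0<..<1}. \<exists>R>0. \<forall>i\<in>{1..N}. \<forall>x\<in>frontier (Gi i) \<inter> frontier G.
            \<forall>y\<in>closure G. norm (x - y) < R \<longrightarrow> n i \<bullet> (y - x) \<ge> - \<epsilon> * norm (x - y))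
       \<and> (Dfun {1..N} (\<lambda>j. frontier (Gi j) \<inter> frontier G) \<longlongrightarrow> 0) (at_right 0)"
proof -
  define I where "I = {1..N}"
  define P where "P = (\<Inter>i\<in>I. {x. \<beta> i < n i \<bullet> x})"
  define F where "F j = frontier (Gi j) \<inter> frontier G" for j
  have unit_I: "\<forall>i\<in>I. norm (n i) = 1"
    using unit by (simp add: I_def)
  have G_eq: "G = P"
    using Gi_def by (auto simp: G_def P_def I_def)
  have "P \<noteq> {}"
    using G_domain G_eq by simp
  have F_eq: "\<forall>j\<in>I. F j = frontier {x. \<beta> j < n j \<bullet> x} \<inter> frontier P"
    using Gi_def by (simp add: F_def G_eq I_def)
  have nonneg: "0 \<le> n i \<bullet> (y - x)" if "i \<in> I" "x \<in> F i" "y \<in> closure G" for i x y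
    using inner_diff_nonneg_face_halfspaces_gt[OF _ P_def \<open>P \<noteq> {}\<close>] unit_I F_eq that
    by (force simp: G_eq)
  then have "\<forall>\<epsilon>\<in>{0<..<1}. \<exists>R>0. \<forall>i\<in>I. \<forall>x\<in>F i. \<forall>y\<in>closure G.
      norm (x - y) < R \<longrightarrow> n i \<bullet> (y - x) \<ge> - \<epsilon> * norm (x - y)"
  proof (intro ballI exI[of _ 1] conjI impI)
    fix \<epsilon> :: real and i x y assume "\<epsilon> \<in> {0<..<1}" "i \<in> I" "x \<in> F i" "y \<in> closure G"
    then have "- \<epsilon> * norm (x - y) \<le> 0" "0 \<le> n i \<bullet> (y - x)"
      using nonneg by auto
    then show "n i \<bullet> (y - x) \<ge> - \<epsilon> * norm (x - y)"
      by linarith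
  qed simp
  moreover have "(Dfun I F \<longlongrightarrow> 0) (at_right 0)"
    using Dfun_faces_halfspaces_gt_tendsto_zero[OF _ P_def unit_I \<open>P \<noteq> {}\<close> F_eq]
    by (simp add: I_def)
  ultimately show ?thesis
    unfolding I_def F_def by (rule conjI)
qed

end
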